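(* Let $\mathcal A$ be a maximal commutative subalgebra of $\mathcal M_d(\mathbb C)$. Suppose $\mathcal B$ is a commutative algebra of block Toeplitz matrices with entries in $\mathcal A$ (i.e. $\mathcal B\subset\mathcal T_{n,d}[\mathcal A]$), and $D$ is a block Toeplitz cyclic diagonal with entries in $\mathcal A$ such that $D\intercal\mathcal B$. Then the algebra $\mathcal B_1$ generated by $\mathcal B$ and $D$ consists of block Toeplitz matrices.
   Context: A block Toeplitz matrix is an $n\times n$ block matrix $A=(A_{i-j})_{i,j=0}^{n-1}$ with $A_m\in\mathcal M_d(\mathbb C)$; $\mathcal T_{n,d}[\mathcal A]$ is the set of block Toeplitz matrices all of whose entries $A_m$ lie in $\mathcal A$. A cyclic diagonal of order $k$ ($0\le k\le n-1$) is an $n\times n$ block matrix $T$ with $T_{i,j}=0$ unless $i-j=k$ or $i-j=k-n$. For block Toeplitz $A,B$, write $A\intercal B$ if $AB$ is block Toeplitz, and $A\intercal\mathcal S$ if $A\intercal B$ for all $B\in\mathcal S$. *)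

theory Defs
  imports Complex_Main "Jordan_Normal_Form.Matrix"
begin

text \<open>A block matrix with n x n blocks of size d x d is represented as an (n*d) x (n*d)
  complex matrix. Block (i,j) is the d x d submatrix in block-row i, block-column j.\<close>

definition blk :: "nat \<Rightarrow> complex mat \<Rightarrow> nat \<Rightarrow> nat \<Rightarrow> complex mat" where
  "blk d M i j = mat d d (\<lambda>(a, b). M $$ (i * d + a, j * d + b))"

definition is_subalg :: "nat \<Rightarrow> complex mat set \<Rightarrow> bool" where
  "is_subalg d S \<longleftrightarrow> S \<subseteq> carrier_mat d d \<and> 0\<^sub>m d d \<in> S \<and>
     (\<forall>X\<in>S. \<forall>Y\<in>S. X + Y \<in> S \<and> X * Y \<in> S) \<and> (\<forall>c. \<forall>X\<in>S. c \<cdot>\<^sub>m X \<in> S)"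

definition is_commutative :: "complex mat set \<Rightarrow> bool" where
  "is_commutative S \<longleftrightarrow> (\<forall>X\<in>S. \<forall>Y\<in>S. X * Y = Y * X)"

definition max_comm_subalg :: "nat \<Rightarrow> complex mat set \<Rightarrow> bool" where
  "max_comm_subalg d S \<longleftrightarrow> is_subalg d S \<and> is_commutative S \<and>
     (\<forall>T. is_subalg d T \<and> is_commutative T \<and> S \<subseteq> T \<longrightarrow> T = S)"

definition block_toeplitz :: "nat \<Rightarrow> nat \<Rightarrow> complex mat \<Rightarrow> bool" where
  "block_toeplitz n d M \<longleftrightarrow> M \<in> carrier_mat (n * d) (n * d) \<and>
     (\<forall>i j k l. i < n \<longrightarrow> j < n \<longrightarrow> k < n \<longrightarrow> l < n \<longrightarrow>
        int i - int j = int k - int l \<longrightarrow> blk d M i j = blk d M k l)"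

definition toeplitz_in :: "nat \<Rightarrow> nat \<Rightarrow> complex mat set \<Rightarrow> complex mat set" where
  "toeplitz_in n d A = {M. block_toeplitz n d M \<and> (\<forall>i<n. \<forall>j<n. blk d M i j \<in> A)}"

definition cyclic_diag :: "nat \<Rightarrow> nat \<Rightarrow> nat \<Rightarrow> complex mat \<Rightarrow> bool" where
  "cyclic_diag n d k T \<longleftrightarrow> k < n \<and> T \<in> carrier_mat (n * d) (n * d) \<and>
     (\<forall>i<n. \<forall>j<n. int i - int j \<noteq> int k \<and> int i - int j \<noteq> int k - int n
        \<longrightarrow> blk d T i j = 0\<^sub>m d d)"

definition toep_rel :: "nat \<Rightarrow> nat \<Rightarrow> complex mat \<Rightarrow> complex mat \<Rightarrow> bool" where
  "toep_rel n d X Y \<longleftrightarrow> block_toeplitz n d (X * Y)"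

definition gen_alg :: "nat \<Rightarrow> complex mat set \<Rightarrow> complex mat set" where
  "gen_alg m G = \<Inter>{S. is_subalg m S \<and> G \<subseteq> S}"

end

theory Submission
  imports Defs
begin

text \<open>Let \<open>\<alpha>\<close> and \<open>\<beta>\<close> be the blocks of \<open>D\<close> on its diagonals \<open>i - j = k\<close> and \<open>i - j = k - n\<close>,
  and \<open>Y\<^sub>m\<close> the block of a block Toeplitz matrix \<open>Y\<close> on the diagonal \<open>i - j = m\<close>. Computing
  \<open>D Y\<close> blockwise shows that for \<open>Y \<in> toeplitz_in n d A\<close> the product \<open>D Y\<close> is block Toeplitz iff
  \<open>\<alpha> Y\<^sub>r = \<beta> Y\<^sub>r\<^sub>+\<^sub>n\<close> for \<open>-n < r < 0\<close>; given this, commutativity of \<open>A\<close> makes the same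
  computation yield \<open>Y D = D Y\<close>. The condition is linear in \<open>Y\<close>, holds for \<open>D\<close>, and passes from
  \<open>Y\<close> to \<open>D Y\<close>. So the smallest subspace containing \<open>B\<close> and \<open>D\<close> and stable under left
  multiplication by \<open>D\<close> consists of block Toeplitz matrices; as \<open>D\<close> commutes with \<open>B\<close>, this
  subspace is closed under products and hence contains the algebra generated by \<open>B\<close> and \<open>D\<close>.\<close>

lemma blk_carrier [simp]: "blk d M i j \<in> carrier_mat d d"
  by (simp add: blk_def)

lemma dim_blk [simp]: "dim_row (blk d M i j) = d" "dim_col (blk d M i j) = d"
  by (simp_all add: blk_def)

lemma index_blk [simp]: "a < d \<Longrightarrow> b < d \<Longrightarrow> blk d M i j $$ (a, b) = M $$ (i * d + a, j * d + b)"
  by (simp add: blk_def)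

lemma block_index_less: "i < n \<Longrightarrow> a < d \<Longrightarrow> i * d + a < n * (d::nat)"
  by (metis add.commute add_less_mono1 le_add2 mult_Suc mult_le_mono1 Suc_leI less_le_trans)

lemma mat_eq_by_blocksI:
  assumes "M \<in> carrier_mat (n * d) (n * d)" "N \<in> carrier_mat (n * d) (n * d)"
    and "\<And>i j. i < n \<Longrightarrow> j < n \<Longrightarrow> blk d M i j = blk d N i j"
  shows "M = N"
proof (rule eq_matI)
  fix a b assume "a < dim_row N" "b < dim_col N"
  then have ab: "a < n * d" "b < n * d" and "0 < d"
    using assms(2) by (auto intro: gr0I)
  then have "a div d < n" "b div d < n" "a mod d < d" "b mod d < d"
    by (simp_all add: less_mult_imp_div_less)
  then have "blk d M (a div d) (b div d) $$ (a mod d, b mod d) =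
      blk d N (a div d) (b div d) $$ (a mod d, b mod d)"
    using assms(3) by simp
  then show "M $$ (a, b) = N $$ (a, b)"
    using \<open>a mod d < d\<close> \<open>b mod d < d\<close> by (simp add: mult.commute)
qed (use assms in auto)

lemma blk_add [simp]:
  "M \<in> carrier_mat (n * d) (n * d) \<Longrightarrow> N \<in> carrier_mat (n * d) (n * d) \<Longrightarrow> i < n \<Longrightarrow> j < n \<Longrightarrow>
   blk d (M + N) i j = blk d M i j + blk d N i j"
  by (rule eq_matI) (auto simp: block_index_less)

lemma blk_smult [simp]:
  "M \<in> carrier_mat (n * d) (n * d) \<Longrightarrow> i < n \<Longrightarrow> j < n \<Longrightarrow> blk d (c \<cdot>\<^sub>m M) i j = c \<cdot>\<^sub>m blk d M i j"
  by (rule eq_matI) (auto simp: block_index_less)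

lemma index_mult_mat_blocks:
  assumes "M \<in> carrier_mat (n * d) (n * d)" "N \<in> carrier_mat (n * d) (n * d)"
    and "i < n" "j < n" "a < d" "b < d"
  shows "(M * N) $$ (i * d + a, j * d + b) = (\<Sum>l<n. (blk d M i l * blk d N l j) $$ (a, b))"
proof -
  define f where "f c = M $$ (i * d + a, c) * N $$ (c, j * d + b)" for c
  have "(M * N) $$ (i * d + a, j * d + b) = (\<Sum>c<n * d. f c)"
    using assms by (simp add: block_index_less scalar_prod_def f_def atLeast0LessThan)
  also have "\<dots> = (\<Sum>l<n. \<Sum>c\<in>{l * d..<l * d + d}. f c)"
    by (rule sum.nat_group [symmetric])
  also have "\<dots> = (\<Sum>l<n. \<Sum>e<d. f (l * d + e))"
    by (simp add: sum.atLeastLessThan_shift_0 atLeast0LessThan add.commute)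
  also have "\<dots> = (\<Sum>l<n. (blk d M i l * blk d N l j) $$ (a, b))"
    using assms by (simp add: scalar_prod_def f_def atLeast0LessThan)
  finally show ?thesis .
qed

lemma blk_mult_single_block:
  assumes "M \<in> carrier_mat (n * d) (n * d)" "N \<in> carrier_mat (n * d) (n * d)"
    and "i < n" "j < n" "l0 < n"
    and zero: "\<And>l. l < n \<Longrightarrow> l \<noteq> l0 \<Longrightarrow> blk d M i l = 0\<^sub>m d d \<or> blk d N l j = 0\<^sub>m d d"
  shows "blk d (M * N) i j = blk d M i l0 * blk d N l0 j"
proof (rule eq_matI)
  fix a b assume "a < dim_row (blk d M i l0 * blk d N l0 j)" "b < dim_col (blk d M i l0 * blk d N l0 j)"
  then have ab: "a < d" "b < d" by simp_all
  have "(blk d M i l * blk d N l j) $$ (a, b) = 0" if "l \<in> {..<n} - {l0}" for l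
    using zero[of l] that ab by auto
  then have "(\<Sum>l<n. (blk d M i l * blk d N l j) $$ (a, b)) = (blk d M i l0 * blk d N l0 j) $$ (a, b)"
    using \<open>l0 < n\<close> by (subst sum.remove[of _ l0]) (auto intro: sum.neutral)
  moreover have "blk d (M * N) i j $$ (a, b) = (\<Sum>l<n. (blk d M i l * blk d N l j) $$ (a, b))"
    using index_mult_mat_blocks[OF assms(1-4) ab] ab by simp
  ultimately show "blk d (M * N) i j $$ (a, b) = (blk d M i l0 * blk d N l0 j) $$ (a, b)"
    by simp
qed simp_all

definition toeplitz_symbol :: "nat \<Rightarrow> complex mat \<Rightarrow> int \<Rightarrow> complex mat" where
  "toeplitz_symbol d Y m = (if 0 \<le> m then blk d Y (nat m) 0 else blk d Y 0 (nat (- m)))"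

lemma block_toeplitzD:
  "block_toeplitz n d Y \<Longrightarrow> i < n \<Longrightarrow> j < n \<Longrightarrow> i' < n \<Longrightarrow> j' < n \<Longrightarrow>
   int i - int j = int i' - int j' \<Longrightarrow> blk d Y i j = blk d Y i' j'"
  unfolding block_toeplitz_def by blast

lemma block_toeplitz_carrier: "block_toeplitz n d Y \<Longrightarrow> Y \<in> carrier_mat (n * d) (n * d)"
  by (simp add: block_toeplitz_def)

lemma blk_eq_toeplitz_symbol:
  assumes "block_toeplitz n d Y" "i < n" "j < n"
  shows "blk d Y i j = toeplitz_symbol d Y (int i - int j)"
proof (cases "j \<le> i")
  case True
  then have "blk d Y i j = blk d Y (i - j) 0"
    using assms by (intro block_toeplitzD) auto
  with True show ?thesis by (simp add: toeplitz_symbol_def nat_diff_distrib)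
next
  case False
  then have "blk d Y i j = blk d Y 0 (j - i)"
    using assms by (intro block_toeplitzD) auto
  with False show ?thesis by (simp add: toeplitz_symbol_def nat_diff_distrib)
qed

lemma toeplitz_symbol_in:
  "Y \<in> toeplitz_in n d A \<Longrightarrow> - int n < m \<Longrightarrow> m < int n \<Longrightarrow> toeplitz_symbol d Y m \<in> A"
  unfolding toeplitz_in_def toeplitz_symbol_def by (auto simp: nat_less_iff)

lemma block_toeplitzI:
  assumes "M \<in> carrier_mat (n * d) (n * d)"
    and "\<And>i j. i < n \<Longrightarrow> j < n \<Longrightarrow> blk d M i j = f (int i - int j)"
  shows "block_toeplitz n d M"
  using assms unfolding block_toeplitz_def by simp

lemma toeplitz_symbol_eqI:
  assumes "\<And>i j. i < n \<Longrightarrow> j < n \<Longrightarrow> blk d M i j = f (int i - int j)"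
    and "- int n < r" "r < int n"
  shows "toeplitz_symbol d M r = f r"
  using assms(1)[of "nat r" 0] assms(1)[of 0 "nat (- r)"] assms(2,3)
  by (auto simp: toeplitz_symbol_def)

lemma block_toeplitz_add:
  assumes M: "block_toeplitz n d M" and N: "block_toeplitz n d N"
  shows "block_toeplitz n d (M + N)"
proof (rule block_toeplitzI)
  note carrier = block_toeplitz_carrier[OF M] block_toeplitz_carrier[OF N]
  then show "M + N \<in> carrier_mat (n * d) (n * d)"
    by simp
  show "blk d (M + N) i j = toeplitz_symbol d M (int i - int j) + toeplitz_symbol d N (int i - int j)"
    if "i < n" "j < n" for i j
    using that carrier by (simp add: blk_eq_toeplitz_symbol[OF M] blk_eq_toeplitz_symbol[OF N])
qed

lemma block_toeplitz_smult:
  assumes M: "block_toeplitz n d M"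
  shows "block_toeplitz n d (c \<cdot>\<^sub>m M)"
proof (rule block_toeplitzI)
  note carrier = block_toeplitz_carrier[OF M]
  then show "c \<cdot>\<^sub>m M \<in> carrier_mat (n * d) (n * d)"
    by simp
  show "blk d (c \<cdot>\<^sub>m M) i j = c \<cdot>\<^sub>m toeplitz_symbol d M (int i - int j)" if "i < n" "j < n" for i j
    using that carrier by (simp add: blk_eq_toeplitz_symbol[OF M])
qed

lemma toeplitz_in_add:
  assumes A: "is_subalg d A" and M: "M \<in> toeplitz_in n d A" and N: "N \<in> toeplitz_in n d A"
  shows "M + N \<in> toeplitz_in n d A"
  unfolding toeplitz_in_def
proof (intro CollectI conjI allI impI)
  have Mt: "block_toeplitz n d M" and Nt: "block_toeplitz n d N"
    using M N by (simp_all add: toeplitz_in_def)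
  then show "block_toeplitz n d (M + N)"
    by (rule block_toeplitz_add)
  fix i j assume "i < n" "j < n"
  moreover have "blk d M i j \<in> A" "blk d N i j \<in> A"
    using M N \<open>i < n\<close> \<open>j < n\<close> by (simp_all add: toeplitz_in_def)
  ultimately show "blk d (M + N) i j \<in> A"
    using A block_toeplitz_carrier [OF Mt] block_toeplitz_carrier [OF Nt]
    by (simp add: is_subalg_def)
qed

lemma toeplitz_in_smult:
  assumes A: "is_subalg d A" and M: "M \<in> toeplitz_in n d A"
  shows "c \<cdot>\<^sub>m M \<in> toeplitz_in n d A"
  unfolding toeplitz_in_def
proof (intro CollectI conjI allI impI)
  have Mt: "block_toeplitz n d M"
    using M by (simp add: toeplitz_in_def)
  then show "block_toeplitz n d (c \<cdot>\<^sub>m M)"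
    by (rule block_toeplitz_smult)
  fix i j assume "i < n" "j < n"
  moreover have "blk d M i j \<in> A"
    using M \<open>i < n\<close> \<open>j < n\<close> by (simp add: toeplitz_in_def)
  ultimately show "blk d (c \<cdot>\<^sub>m M) i j \<in> A"
    using A block_toeplitz_carrier [OF Mt] by (simp add: is_subalg_def)
qed

lemma toep_rel_add:
  assumes "X \<in> carrier_mat (n * d) (n * d)" "Y \<in> carrier_mat (n * d) (n * d)" "Z \<in> carrier_mat (n * d) (n * d)"
    and "toep_rel n d X Y" "toep_rel n d X Z"
  shows "toep_rel n d X (Y + Z)"
  using assms by (simp add: toep_rel_def mult_add_distrib_mat block_toeplitz_add)

lemma toep_rel_smult:
  assumes "X \<in> carrier_mat (n * d) (n * d)" "Y \<in> carrier_mat (n * d) (n * d)" "toep_rel n d X Y"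
  shows "toep_rel n d X (c \<cdot>\<^sub>m Y)"
  using assms by (simp add: toep_rel_def mult_smult_distrib block_toeplitz_smult)

section \<open>The span of \<open>B\<close> and \<open>D\<close> closed under left multiplication by \<open>D\<close>\<close>

inductive_set D_stable_span :: "complex mat set \<Rightarrow> complex mat \<Rightarrow> complex mat set" for B D where
  generator: "X \<in> B \<Longrightarrow> X \<in> D_stable_span B D"
| D: "D \<in> D_stable_span B D"
| D_mult: "M \<in> D_stable_span B D \<Longrightarrow> D * M \<in> D_stable_span B D"
| add: "M \<in> D_stable_span B D \<Longrightarrow> N \<in> D_stable_span B D \<Longrightarrow> M + N \<in> D_stable_span B D"
| smult: "M \<in> D_stable_span B D \<Longrightarrow> c \<cdot>\<^sub>m M \<in> D_stable_span B D"

lemma gen_alg_least: "is_subalg m S \<Longrightarrow> G \<subseteq> S \<Longrightarrow> gen_alg m G \<subseteq> S"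
  unfolding gen_alg_def by blast

lemma subalg_carrier: "is_subalg m S \<Longrightarrow> X \<in> S \<Longrightarrow> X \<in> carrier_mat m m"
  by (auto simp: is_subalg_def)

context
  fixes m :: nat and B :: "complex mat set" and D :: "complex mat"
  assumes B_subalg: "is_subalg m B" and D_carrier: "D \<in> carrier_mat m m"
begin

lemma D_stable_span_carrier: "M \<in> D_stable_span B D \<Longrightarrow> M \<in> carrier_mat m m"
  by (induction rule: D_stable_span.induct)
    (simp_all add: subalg_carrier [OF B_subalg] D_carrier mult_carrier_mat [OF D_carrier])

context
  assumes B_commute_D: "\<And>X. X \<in> B \<Longrightarrow> X * D = D * X"
begin

lemma D_stable_span_mult_left:
  assumes X: "X \<in> B" and "M \<in> D_stable_span B D"
  shows "X * M \<in> D_stable_span B D"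
  using assms(2)
proof induction
  case (generator Y)
  then show ?case
    using X B_subalg by (simp add: is_subalg_def D_stable_span.generator)
next
  case D
  have "X * D = D * X"
    using X by (rule B_commute_D)
  then show ?case
    using X by (simp add: D_stable_span.D_mult D_stable_span.generator)
next
  case (D_mult M)
  have carriers: "X \<in> carrier_mat m m" "M \<in> carrier_mat m m"
    using X D_mult.hyps by (simp_all add: subalg_carrier [OF B_subalg] D_stable_span_carrier)
  have "X * (D * M) = (X * D) * M"
    using carriers D_carrier by (simp add: assoc_mult_mat)
  also have "\<dots> = (D * X) * M"
    using X by (simp add: B_commute_D)
  also have "\<dots> = D * (X * M)"
    using carriers D_carrier by (simp add: assoc_mult_mat)
  finally show ?case
    using D_mult.IH by (simp add: D_stable_span.D_mult)
next
  case (add M N)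
  have "X \<in> carrier_mat m m"
    using B_subalg X by (rule subalg_carrier)
  then have "X * (M + N) = X * M + X * N"
    using D_stable_span_carrier [OF add.hyps(1)] D_stable_span_carrier [OF add.hyps(2)]
    by (simp add: mult_add_distrib_mat)
  then show ?case
    using add.IH by (simp add: D_stable_span.add)
next
  case (smult M c)
  have "X \<in> carrier_mat m m"
    using B_subalg X by (rule subalg_carrier)
  then have "X * (c \<cdot>\<^sub>m M) = c \<cdot>\<^sub>m (X * M)"
    using D_stable_span_carrier [OF smult.hyps] by (simp add: mult_smult_distrib)
  then show ?case
    using smult.IH by (simp add: D_stable_span.smult)
qed

lemma D_stable_span_mult:
  assumes "M \<in> D_stable_span B D" and N: "N \<in> D_stable_span B D"
  shows "M * N \<in> D_stable_span B D"
  using assms(1)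
proof induction
  case (generator X)
  then show ?case
    using N by (rule D_stable_span_mult_left)
next
  case D
  then show ?case
    using N by (rule D_stable_span.D_mult)
next
  case (D_mult M)
  have "(D * M) * N = D * (M * N)"
    using D_carrier D_stable_span_carrier [OF D_mult.hyps] D_stable_span_carrier [OF N]
    by (simp add: assoc_mult_mat)
  then show ?case
    using D_mult.IH by (simp add: D_stable_span.D_mult)
next
  case (add M M')
  have "(M + M') * N = M * N + M' * N"
    using D_stable_span_carrier [OF add.hyps(1)] D_stable_span_carrier [OF add.hyps(2)]
      D_stable_span_carrier [OF N]
    by (simp add: add_mult_distrib_mat)
  then show ?case
    using add.IH by (simp add: D_stable_span.add)
next
  case (smult M c)
  have "(c \<cdot>\<^sub>m M) * N = c \<cdot>\<^sub>m (M * N)"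
    using D_stable_span_carrier [OF smult.hyps] D_stable_span_carrier [OF N]
    by (simp add: mult_smult_assoc_mat)
  then show ?case
    using smult.IH by (simp add: D_stable_span.smult)
qed

lemma D_stable_span_subalg: "is_subalg m (D_stable_span B D)"
proof -
  have "0\<^sub>m m m \<in> D_stable_span B D"
    using B_subalg by (simp add: is_subalg_def D_stable_span.generator)
  then show ?thesis
    unfolding is_subalg_def
    by (intro conjI subsetI ballI allI)
      (simp_all add: D_stable_span_carrier D_stable_span_mult D_stable_span.add D_stable_span.smult)
qed

end

end

section \<open>Products with a block Toeplitz cyclic diagonal\<close>

locale toeplitz_cyclic_diag =
  fixes n d k :: nat and A :: "complex mat set" and D :: "complex mat"
  assumes A_subalg: "is_subalg d A" and A_commutative: "is_commutative A"
    and D_in: "D \<in> toeplitz_in n d A" and D_cyclic: "cyclic_diag n d k D"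
begin

definition \<alpha> :: "complex mat" where "\<alpha> = blk d D k 0"
definition \<beta> :: "complex mat" where "\<beta> = blk d D 0 (n - k)"

lemma k_less_n: "k < n"
  using D_cyclic by (simp add: cyclic_diag_def)

lemma D_carrier: "D \<in> carrier_mat (n * d) (n * d)"
  using D_cyclic by (simp add: cyclic_diag_def)

lemma D_toeplitz: "block_toeplitz n d D"
  using D_in by (simp add: toeplitz_in_def)

lemma A_carrier: "X \<in> A \<Longrightarrow> X \<in> carrier_mat d d"
  using A_subalg by (rule subalg_carrier)

lemma A_mult: "X \<in> A \<Longrightarrow> Y \<in> A \<Longrightarrow> X * Y \<in> A"
  using A_subalg by (simp add: is_subalg_def)

lemma A_mult_commute: "X \<in> A \<Longrightarrow> Y \<in> A \<Longrightarrow> X * Y = Y * X"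
  using A_commutative by (simp add: is_commutative_def)

lemma alpha_in_A: "\<alpha> \<in> A"
  using D_in k_less_n by (simp add: toeplitz_in_def \<alpha>_def)

lemma beta_in_A: "0 < k \<Longrightarrow> \<beta> \<in> A"
  using D_in k_less_n by (simp add: toeplitz_in_def \<beta>_def)

lemma blk_D:
  assumes "i < n" "l < n"
  shows "blk d D i l =
    (if int i - int l = int k then \<alpha> else if int i - int l = int k - int n then \<beta> else 0\<^sub>m d d)"
proof -
  have "blk d D i l = \<alpha>" if "int i - int l = int k"
    unfolding \<alpha>_def using that assms k_less_n by (intro block_toeplitzD [OF D_toeplitz]) auto
  moreover have "blk d D i l = \<beta>" if "int i - int l = int k - int n"
    unfolding \<beta>_def using that assms k_less_n by (intro block_toeplitzD [OF D_toeplitz]) auto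
  moreover have "blk d D i l = 0\<^sub>m d d" if "int i - int l \<noteq> int k" "int i - int l \<noteq> int k - int n"
    using D_cyclic that assms by (simp add: cyclic_diag_def)
  ultimately show ?thesis
    by auto
qed

lemma blk_D_mult:
  assumes "Y \<in> carrier_mat (n * d) (n * d)" "i < n" "j < n"
  shows "blk d (D * Y) i j = (if k \<le> i then \<alpha> * blk d Y (i - k) j else \<beta> * blk d Y (i + n - k) j)"
proof -
  define l0 where "l0 = (if k \<le> i then i - k else i + n - k)"
  have "l0 < n"
    using assms k_less_n by (auto simp: l0_def)
  have "blk d D i l = 0\<^sub>m d d" if "l < n" "l \<noteq> l0" for l
    using that assms k_less_n by (auto simp: blk_D l0_def)
  then have "blk d (D * Y) i j = blk d D i l0 * blk d Y l0 j"
    using assms \<open>l0 < n\<close> by (intro blk_mult_single_block [OF D_carrier]) auto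
  also have "blk d D i l0 = (if k \<le> i then \<alpha> else \<beta>)"
    using assms k_less_n \<open>l0 < n\<close> by (auto simp: blk_D l0_def)
  finally show ?thesis
    by (simp add: l0_def)
qed

lemma blk_mult_D:
  assumes "Y \<in> carrier_mat (n * d) (n * d)" "i < n" "j < n"
  shows "blk d (Y * D) i j = (if j + k < n then blk d Y i (j + k) * \<alpha> else blk d Y i (j + k - n) * \<beta>)"
proof -
  define l0 where "l0 = (if j + k < n then j + k else j + k - n)"
  have "l0 < n"
    using assms k_less_n by (auto simp: l0_def)
  have "blk d D l j = 0\<^sub>m d d" if "l < n" "l \<noteq> l0" for l
    using that assms k_less_n by (auto simp: blk_D l0_def)
  then have "blk d (Y * D) i j = blk d Y i l0 * blk d D l0 j"
    using assms \<open>l0 < n\<close> by (intro blk_mult_single_block [OF _ D_carrier]) auto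
  also have "blk d D l0 j = (if j + k < n then \<alpha> else \<beta>)"
    using assms k_less_n \<open>l0 < n\<close> by (auto simp: blk_D l0_def)
  finally show ?thesis
    by (simp add: l0_def)
qed

lemma blk_D_mult_toeplitz:
  assumes "block_toeplitz n d Y" "i < n" "j < n"
  defines "m \<equiv> int i - int j - int k"
  shows "blk d (D * Y) i j =
    (if k \<le> i then \<alpha> * toeplitz_symbol d Y m else \<beta> * toeplitz_symbol d Y (m + int n))"
  using assms k_less_n
  by (simp add: blk_D_mult block_toeplitz_carrier blk_eq_toeplitz_symbol) (simp add: algebra_simps)

lemma blk_mult_D_toeplitz:
  assumes "Y \<in> toeplitz_in n d A" "i < n" "j < n"
  defines "m \<equiv> int i - int j - int k"
  shows "blk d (Y * D) i j =
    (if j + k < n then \<alpha> * toeplitz_symbol d Y m else \<beta> * toeplitz_symbol d Y (m + int n))"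
proof -
  have Y: "block_toeplitz n d Y"
    using assms(1) by (simp add: toeplitz_in_def)
  have "blk d (Y * D) i j =
    (if j + k < n then toeplitz_symbol d Y m * \<alpha> else toeplitz_symbol d Y (m + int n) * \<beta>)"
    using assms k_less_n
    by (simp add: blk_mult_D block_toeplitz_carrier[OF Y] blk_eq_toeplitz_symbol[OF Y])
      (simp add: algebra_simps)
  also have "\<dots> = (if j + k < n then \<alpha> * toeplitz_symbol d Y m else \<beta> * toeplitz_symbol d Y (m + int n))"
  proof (cases "j + k < n")
    case True
    then have "toeplitz_symbol d Y m \<in> A"
      using assms by (intro toeplitz_symbol_in) auto
    with True show ?thesis
      by (simp add: A_mult_commute [OF _ alpha_in_A])
  next
    case False
    then have "0 < k" "toeplitz_symbol d Y (m + int n) \<in> A"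
      using assms k_less_n by (auto intro: toeplitz_symbol_in)
    with False show ?thesis
      by (simp add: A_mult_commute [OF _ beta_in_A])
  qed
  finally show ?thesis .
qed

text \<open>For \<open>k = 0\<close> there is no wrap-around diagonal (and \<open>\<beta>\<close> is a junk block), so the
  condition is then vacuous.\<close>
definition wrap_compatible :: "complex mat \<Rightarrow> bool" where
  "wrap_compatible Y \<longleftrightarrow> (0 < k \<longrightarrow> (\<forall>r. - int n < r \<and> r < 0 \<longrightarrow>
     \<alpha> * toeplitz_symbol d Y r = \<beta> * toeplitz_symbol d Y (r + int n)))"

definition D_mult_symbol :: "complex mat \<Rightarrow> int \<Rightarrow> complex mat" where
  "D_mult_symbol Y m =
    (if - int n < m then \<alpha> * toeplitz_symbol d Y m else \<beta> * toeplitz_symbol d Y (m + int n))"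

lemma D_mult_symbol_wrap:
  assumes "wrap_compatible Y" "0 < k" "m < 0"
  shows "D_mult_symbol Y m = \<beta> * toeplitz_symbol d Y (m + int n)"
proof (cases "- int n < m")
  case True
  with assms have "\<alpha> * toeplitz_symbol d Y m = \<beta> * toeplitz_symbol d Y (m + int n)"
    unfolding wrap_compatible_def by blast
  with True show ?thesis
    by (simp add: D_mult_symbol_def)
qed (simp add: D_mult_symbol_def)

lemma blk_D_mult_eq_D_mult_symbol:
  assumes "block_toeplitz n d Y" "wrap_compatible Y" "i < n" "j < n"
  shows "blk d (D * Y) i j = D_mult_symbol Y (int i - int j - int k)"
  using assms by (simp add: blk_D_mult_toeplitz D_mult_symbol_wrap) (simp add: D_mult_symbol_def)

lemma blk_mult_D_eq_D_mult_symbol: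
  assumes "Y \<in> toeplitz_in n d A" "wrap_compatible Y" "i < n" "j < n"
  shows "blk d (Y * D) i j = D_mult_symbol Y (int i - int j - int k)"
  using assms by (simp add: blk_mult_D_toeplitz D_mult_symbol_wrap) (simp add: D_mult_symbol_def)

lemma D_mult_symbol_in:
  assumes "Y \<in> toeplitz_in n d A" "i < n" "j < n"
  shows "D_mult_symbol Y (int i - int j - int k) \<in> A"
proof (cases "- int n < int i - int j - int k")
  case True
  then show ?thesis
    using assms by (simp add: D_mult_symbol_def A_mult alpha_in_A toeplitz_symbol_in)
next
  case False
  then have "0 < k"
    using assms by simp
  with False show ?thesis
    using assms k_less_n by (simp add: D_mult_symbol_def A_mult beta_in_A toeplitz_symbol_in)
qed

text \<open>The blocks \<open>(k, q)\<close> and \<open>(k - 1, q - 1)\<close> of \<open>D Y\<close> lie on the same diagonal;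
  one picks up \<open>\<alpha>\<close>, the other \<open>\<beta>\<close>.\<close>
lemma wrap_compatible_if_toep_rel:
  assumes Y: "block_toeplitz n d Y" and DY: "toep_rel n d D Y"
  shows "wrap_compatible Y"
  unfolding wrap_compatible_def
proof (intro impI allI)
  fix r assume "0 < k" and r: "- int n < r \<and> r < 0"
  define q where "q = nat (- r)"
  have q: "0 < q" "q < n" "r = - int q"
    using r by (auto simp: q_def)
  have "blk d (D * Y) k q = blk d (D * Y) (k - 1) (q - 1)"
    using DY q \<open>0 < k\<close> k_less_n by (intro block_toeplitzD) (auto simp: toep_rel_def)
  moreover have "\<not> k \<le> k - 1" "int (k - 1) = int k - 1" "int (q - 1) = int q - 1"
    using q \<open>0 < k\<close> by auto
  ultimately show "\<alpha> * toeplitz_symbol d Y r = \<beta> * toeplitz_symbol d Y (r + int n)"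
    using q k_less_n by (simp add: blk_D_mult_toeplitz [OF Y])
qed

lemma toep_rel_D_iff:
  assumes "block_toeplitz n d Y"
  shows "toep_rel n d D Y \<longleftrightarrow> wrap_compatible Y"
proof
  assume "wrap_compatible Y"
  moreover have "D * Y \<in> carrier_mat (n * d) (n * d)"
    using D_carrier assms by (simp add: block_toeplitz_carrier)
  ultimately show "toep_rel n d D Y"
    unfolding toep_rel_def using assms
    by (intro block_toeplitzI [where f = "\<lambda>m. D_mult_symbol Y (m - int k)"])
      (simp_all add: blk_D_mult_eq_D_mult_symbol)
qed (rule wrap_compatible_if_toep_rel [OF assms])

lemma D_mult_commute:
  assumes Y: "Y \<in> toeplitz_in n d A" and DY: "toep_rel n d D Y"
  shows "D * Y = Y * D"
proof (rule mat_eq_by_blocksI)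
  have Yt: "block_toeplitz n d Y"
    using Y by (simp add: toeplitz_in_def)
  then have wrap: "wrap_compatible Y"
    using DY by (simp add: toep_rel_D_iff)
  show "D * Y \<in> carrier_mat (n * d) (n * d)" "Y * D \<in> carrier_mat (n * d) (n * d)"
    using D_carrier block_toeplitz_carrier [OF Yt] by auto
  show "blk d (D * Y) i j = blk d (Y * D) i j" if "i < n" "j < n" for i j
    using blk_D_mult_eq_D_mult_symbol [OF Yt wrap that] blk_mult_D_eq_D_mult_symbol [OF Y wrap that]
    by simp
qed

lemma D_mult_in_toeplitz_in:
  assumes Y: "Y \<in> toeplitz_in n d A" and DY: "toep_rel n d D Y"
  shows "D * Y \<in> toeplitz_in n d A"
  unfolding toeplitz_in_def
proof (intro CollectI conjI allI impI)
  show "block_toeplitz n d (D * Y)"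
    using DY by (simp add: toep_rel_def)
  have Yt: "block_toeplitz n d Y"
    using Y by (simp add: toeplitz_in_def)
  then have wrap: "wrap_compatible Y"
    using DY by (simp add: toep_rel_D_iff)
  show "blk d (D * Y) i j \<in> A" if "i < n" "j < n" for i j
    using blk_D_mult_eq_D_mult_symbol [OF Yt wrap that] D_mult_symbol_in [OF Y that] by simp
qed

lemma toeplitz_symbol_D_mult:
  assumes "block_toeplitz n d Y" "wrap_compatible Y" "- int n < r" "r < int n"
  shows "toeplitz_symbol d (D * Y) r = D_mult_symbol Y (r - int k)"
  using assms by (intro toeplitz_symbol_eqI) (simp_all add: blk_D_mult_eq_D_mult_symbol)

text \<open>Both sides reduce to \<open>\<alpha> \<beta> s\<close> resp. \<open>\<beta> \<alpha> s\<close>, with \<open>s\<close> the symbol of \<open>Y\<close>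
  at \<open>r - k + n\<close>.\<close>
lemma wrap_compatible_D_mult:
  assumes "Y \<in> toeplitz_in n d A" "wrap_compatible Y"
  shows "wrap_compatible (D * Y)"
  unfolding wrap_compatible_def
proof (intro impI allI)
  fix r assume "0 < k" and r: "- int n < r \<and> r < 0"
  have Y: "block_toeplitz n d Y"
    using assms by (simp add: toeplitz_in_def)
  define s where "s = toeplitz_symbol d Y (r - int k + int n)"
  have "s \<in> A"
    unfolding s_def using assms r k_less_n by (intro toeplitz_symbol_in) auto
  then have carriers: "\<alpha> \<in> carrier_mat d d" "\<beta> \<in> carrier_mat d d" "s \<in> carrier_mat d d"
    using A_carrier alpha_in_A beta_in_A \<open>0 < k\<close> by auto
  have "toeplitz_symbol d (D * Y) r = \<beta> * s"
    using assms Y r \<open>0 < k\<close> by (simp add: toeplitz_symbol_D_mult D_mult_symbol_wrap s_def)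
  moreover have "toeplitz_symbol d (D * Y) (r + int n) = \<alpha> * s"
    using assms Y r k_less_n by (simp add: toeplitz_symbol_D_mult D_mult_symbol_def s_def algebra_simps)
  moreover have "\<alpha> * (\<beta> * s) = \<beta> * (\<alpha> * s)"
  proof -
    have "\<alpha> * (\<beta> * s) = (\<alpha> * \<beta>) * s"
      using carriers by (simp add: assoc_mult_mat)
    also have "\<dots> = (\<beta> * \<alpha>) * s"
      using A_mult_commute [OF alpha_in_A beta_in_A [OF \<open>0 < k\<close>]] by simp
    also have "\<dots> = \<beta> * (\<alpha> * s)"
      using carriers by (simp add: assoc_mult_mat)
    finally show ?thesis .
  qed
  ultimately show "\<alpha> * toeplitz_symbol d (D * Y) r = \<beta> * toeplitz_symbol d (D * Y) (r + int n)"
    by simp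
qed

lemma wrap_compatible_D: "wrap_compatible D"
  unfolding wrap_compatible_def
proof (intro impI allI)
  fix r assume "0 < k" and r: "- int n < r \<and> r < 0"
  define f where "f m = (if m = int k then \<alpha> else if m = int k - int n then \<beta> else 0\<^sub>m d d)" for m
  have "toeplitz_symbol d D m = f m" if "- int n < m" "m < int n" for m
    using that by (intro toeplitz_symbol_eqI) (simp_all add: blk_D f_def)
  then have "toeplitz_symbol d D r = f r" "toeplitz_symbol d D (r + int n) = f (r + int n)"
    using r by auto
  moreover have "\<alpha> \<in> carrier_mat d d" "\<beta> \<in> carrier_mat d d"
    using A_carrier alpha_in_A beta_in_A \<open>0 < k\<close> by auto
  ultimately show "\<alpha> * toeplitz_symbol d D r = \<beta> * toeplitz_symbol d D (r + int n)"
    using r \<open>0 < k\<close> k_less_n A_mult_commute [OF alpha_in_A beta_in_A] by (auto simp: f_def)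
qed

lemma toep_rel_D_D: "toep_rel n d D D"
  using D_toeplitz wrap_compatible_D toep_rel_D_iff by blast

lemma toep_rel_D_D_mult:
  assumes "Y \<in> toeplitz_in n d A" "toep_rel n d D Y"
  shows "toep_rel n d D (D * Y)"
proof -
  have "wrap_compatible Y"
    using assms toep_rel_D_iff by (simp add: toeplitz_in_def)
  then have "wrap_compatible (D * Y)"
    by (rule wrap_compatible_D_mult [OF assms(1)])
  moreover have "block_toeplitz n d (D * Y)"
    using assms(2) by (simp add: toep_rel_def)
  ultimately show ?thesis
    using toep_rel_D_iff by blast
qed

lemma D_stable_span_toeplitz_in:
  assumes "B \<subseteq> toeplitz_in n d A" "\<forall>X\<in>B. toep_rel n d D X" "M \<in> D_stable_span B D"
  shows "M \<in> toeplitz_in n d A \<and> toep_rel n d D M"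
  using assms(3)
proof induction
  case (generator X)
  then show ?case
    using assms(1,2) by auto
next
  case D
  show ?case
    using D_in toep_rel_D_D by simp
next
  case (D_mult M)
  then show ?case
    using D_mult_in_toeplitz_in toep_rel_D_D_mult by simp
next
  case (add M N)
  then have "M \<in> carrier_mat (n * d) (n * d)" "N \<in> carrier_mat (n * d) (n * d)"
    by (simp_all add: toeplitz_in_def block_toeplitz_carrier)
  then show ?case
    using add.IH D_carrier A_subalg by (simp add: toeplitz_in_add toep_rel_add)
next
  case (smult M c)
  then have "M \<in> carrier_mat (n * d) (n * d)"
    by (simp add: toeplitz_in_def block_toeplitz_carrier)
  then show ?case
    using smult.IH D_carrier A_subalg by (simp add: toeplitz_in_smult toep_rel_smult)
qed

end

theorem corollary4p4:
  fixes n d k :: nat and A B :: "complex mat set" and D :: "complex mat"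
  assumes "max_comm_subalg d A"
    and "is_subalg (n * d) B" and "is_commutative B"
    and "B \<subseteq> toeplitz_in n d A"
    and "D \<in> toeplitz_in n d A" and "cyclic_diag n d k D"
    and "\<forall>X\<in>B. toep_rel n d D X"
  shows "\<forall>M \<in> gen_alg (n * d) (B \<union> {D}). block_toeplitz n d M"
proof -
  interpret toeplitz_cyclic_diag n d k A D
    using assms(1,5,6) by unfold_locales (auto simp: max_comm_subalg_def)
  have "X * D = D * X" if "X \<in> B" for X
    using that assms(4,7) D_mult_commute by auto
  then have "is_subalg (n * d) (D_stable_span B D)"
    using assms(2) D_carrier by (intro D_stable_span_subalg)
  then have "gen_alg (n * d) (B \<union> {D}) \<subseteq> D_stable_span B D"
    by (rule gen_alg_least) (auto intro: D_stable_span.intros)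
  moreover have "M \<in> toeplitz_in n d A" if "M \<in> D_stable_span B D" for M
    using D_stable_span_toeplitz_in [OF assms(4,7) that] by simp
  ultimately show ?thesis
    by (auto simp: toeplitz_in_def)
qed

end
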